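(* Let $X$ be a topological space, let $Y$ be a functionally Hausdorff space, let $S$ be a dense subset of $X$ and let $f:S\to Y$ be continuous. Then the following are equivalent: (1) $f$ has a continuous extension to $X$; (2) for every family $\{A_\beta\}$ of closed subsets of $Y$ with $\bigcap_\beta A_\beta=\emptyset$ one has $\bigcap_\beta\overline{f^{-1}(A_\beta)}=\emptyset$ (closures in $X$), and for every open set $V$ of $Y$ the set $X_{\theta^\omega}(f^{-1}(V))$ is open in $X$.
   Context: A space is functionally Hausdorff if any two distinct points can be separated by a continuous real-valued function. $\mathcal N(x)$ is the set of open neighborhoods of $x$ in $X$. For a subset $A$ of $Y$ and an ordinal $\alpha>0$, an $\alpha$-hull of $A$ is an open set $U\supseteq A$ for which there exists a family $\{U_\beta\}_{\beta\le\alpha}$ of open sets containing $A$ with $\mathrm{cl}\,U_\beta\subseteq U_{\beta+1}$ whenever $\beta+1\le\alpha$ and $U=U_\alpha=\bigcup_{\beta\le\alpha}U_\beta$. For $M\subseteq Y$, $\mathrm{cl}_{\theta^\omega}M$ is the set of $y\in Y$ such that every $\omega$-hull $U$ of $y$ satisfies $\mathrm{cl}\,U\cap M\neq\emptyset$. For $V\subseteq Y$, $X_{\theta^\omega}(f^{-1}(V))$ is the set of points $x\in X$ with $\bigcap\{\mathrm{cl}_{\theta^\omega} f(P\cap S):P\in\mathcal N(x)\}\subseteq V$. *)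

theory Defs
  imports "HOL-Analysis.Analysis"
begin

definition functionally_hausdorff :: "'a topology \<Rightarrow> bool" where
  "functionally_hausdorff Y \<longleftrightarrow>
     (\<forall>x\<in>topspace Y. \<forall>y\<in>topspace Y. x \<noteq> y \<longrightarrow>
        (\<exists>g. continuous_map Y euclideanreal g \<and> g x \<noteq> g y))"

text \<open>An omega-hull of A: the family indexed by ordinals beta \<le> omega is given by
  Us n (n < omega) and Uom (beta = omega).\<close>
definition omega_hull :: "'a topology \<Rightarrow> 'a set \<Rightarrow> 'a set \<Rightarrow> bool" where
  "omega_hull Y A U \<longleftrightarrow>
     (\<exists>Us Uom. (\<forall>n. openin Y (Us n) \<and> A \<subseteq> Us n) \<and> openin Y Uom \<and> A \<subseteq> Uom \<and>
        (\<forall>n::nat. Y closure_of (Us n) \<subseteq> Us (Suc n)) \<and>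
        U = Uom \<and> U = (\<Union>n. Us n) \<union> Uom)"

definition closure_theta_omega :: "'a topology \<Rightarrow> 'a set \<Rightarrow> 'a set" where
  "closure_theta_omega Y M =
     {y \<in> topspace Y. \<forall>U. omega_hull Y {y} U \<longrightarrow> Y closure_of U \<inter> M \<noteq> {}}"

definition X_theta_omega :: "'a topology \<Rightarrow> 'b topology \<Rightarrow> 'a set \<Rightarrow> ('a \<Rightarrow> 'b) \<Rightarrow> 'b set \<Rightarrow> 'a set" where
  "X_theta_omega X Y S f V =
     {x \<in> topspace X.
        (\<Inter>P\<in>{P. openin X P \<and> x \<in> P}. closure_theta_omega Y (f ` (P \<inter> S))) \<subseteq> V}"

end

theory Submission
  imports Defs
begin

text \<open>The extension is forced: at \<open>x\<close> it must be the unique point of the cluster set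
  \<open>K x = \<Inter>{cl\<^sub>\<theta>\<^sub>\<omega> f(P \<inter> S) | P open, x \<in> P}\<close>, and \<open>X\<^sub>\<theta>\<^sub>\<omega>(f\<^sup>-\<^sup>1 V) = {x. K x \<subseteq> V}\<close> is
  then the preimage of \<open>V\<close>. A real function separating two points of \<open>Y\<close> yields
  \<open>\<omega>\<close>-hulls of them (strict sublevel sets with levels increasing towards a bound) whose
  closures lie in disjoint closed sets; the intersection condition, applied to such a pair,
  forbids two points in one \<open>K x\<close>, and applied to the closures of the sets \<open>f(P \<inter> S)\<close>
  guarantees some point in \<open>K x\<close>.\<close>

lemma omega_hull_openin: "omega_hull Y A U \<Longrightarrow> openin Y U \<and> A \<subseteq> U"
  unfolding omega_hull_def by blast

lemma omega_hull_in_sublevel: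
  assumes h: "continuous_map Y euclideanreal h" and y: "y \<in> topspace Y" and c: "h y < c"
  shows "\<exists>U. omega_hull Y {y} U \<and> Y closure_of U \<subseteq> {z \<in> topspace Y. h z \<le> c}"
proof -
  define d where "d = c - h y"
  have d: "d > 0" using c by (simp add: d_def)
  define Us where "Us n = {z \<in> topspace Y. h z < c - d / (real n + 2)}" for n
  define Uom where "Uom = {z \<in> topspace Y. h z < c}"
  have open_sublevel: "openin Y {z \<in> topspace Y. h z < a}" for a
    using openin_continuous_map_preimage[OF h, of "{..<a}"] by simp
  have closure_sublevel: "Y closure_of {z \<in> topspace Y. h z < a} \<subseteq> {z \<in> topspace Y. h z \<le> a}" for a
  proof (rule closure_of_minimal)
    show "closedin Y {z \<in> topspace Y. h z \<le> a}"
      using closedin_continuous_map_preimage[OF h, of "{..a}"] by simp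
  qed auto
  have y_in: "y \<in> Us n" for n
  proof -
    have "d / (real n + 2) < d" using d by (simp add: divide_less_eq)
    then show ?thesis using y by (simp add: Us_def d_def)
  qed
  have closure_step: "Y closure_of Us n \<subseteq> Us (Suc n)" for n
  proof -
    have "d / (3 + real n) < d / (real n + 2)" using d by (simp add: frac_less2)
    then have "c - d / (real n + 2) < c - d / (real (Suc n) + 2)" by simp
    then show ?thesis using closure_sublevel[of "c - d / (real n + 2)"] unfolding Us_def by fastforce
  qed
  have "Us n \<subseteq> Uom" for n
    using d unfolding Us_def Uom_def by (auto intro: order.strict_trans2 simp: divide_nonneg_pos)
  then have "omega_hull Y {y} Uom"
    unfolding omega_hull_def using open_sublevel y c y_in closure_step
    by (intro exI[of _ Us] exI[of _ Uom]) (auto simp: Us_def Uom_def)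
  moreover have "Y closure_of Uom \<subseteq> {z \<in> topspace Y. h z \<le> c}"
    using closure_sublevel unfolding Uom_def by blast
  ultimately show ?thesis by blast
qed

lemma functionally_hausdorff_less:
  assumes "functionally_hausdorff Y" "y1 \<in> topspace Y" "y2 \<in> topspace Y" "y1 \<noteq> y2"
  obtains h where "continuous_map Y euclideanreal h" "h y1 < h y2"
proof -
  obtain g where g: "continuous_map Y euclideanreal g" "g y1 \<noteq> g y2"
    using assms unfolding functionally_hausdorff_def by blast
  show ?thesis
  proof (cases "g y1 < g y2")
    case False
    then have "- g y1 < - g y2" using g(2) by simp
    then show ?thesis using that[of "\<lambda>z. - g z"] g(1) by (simp add: continuous_map_minus)
  qed (use that g in blast)
qed

lemma functionally_hausdorff_omega_hull_separation:
  assumes "functionally_hausdorff Y" "y1 \<in> topspace Y" "y2 \<in> topspace Y" "y1 \<noteq> y2"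
  obtains U1 U2 A1 A2 where "omega_hull Y {y1} U1" "omega_hull Y {y2} U2"
    "closedin Y A1" "closedin Y A2" "A1 \<inter> A2 = {}"
    "Y closure_of U1 \<subseteq> A1" "Y closure_of U2 \<subseteq> A2"
proof -
  obtain h where h: "continuous_map Y euclideanreal h" "h y1 < h y2"
    using functionally_hausdorff_less[OF assms] .
  have neg_h: "continuous_map Y euclideanreal (\<lambda>z. - h z)"
    using h(1) by (simp add: continuous_map_minus)
  define c1 where "c1 = h y1 + (h y2 - h y1) / 3"
  define c2 where "c2 = h y2 - (h y2 - h y1) / 3"
  have "h y1 < c1" "c1 < c2" "- h y2 < - c2"
    using h(2) by (simp_all add: c1_def c2_def field_simps)
  obtain U1 where U1: "omega_hull Y {y1} U1" "Y closure_of U1 \<subseteq> {z \<in> topspace Y. h z \<le> c1}"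
    using omega_hull_in_sublevel[OF h(1) assms(2) \<open>h y1 < c1\<close>] by blast
  obtain U2 where U2: "omega_hull Y {y2} U2"
      "Y closure_of U2 \<subseteq> {z \<in> topspace Y. - h z \<le> - c2}"
    using omega_hull_in_sublevel[OF neg_h assms(3) \<open>- h y2 < - c2\<close>] by blast
  show ?thesis
  proof (rule that[OF U1(1) U2(1) _ _ _ U1(2) U2(2)])
    show "closedin Y {z \<in> topspace Y. h z \<le> c1}"
      using closedin_continuous_map_preimage[OF h(1), of "{..c1}"] by simp
    show "closedin Y {z \<in> topspace Y. - h z \<le> - c2}"
      using closedin_continuous_map_preimage[OF neg_h, of "{..-c2}"] by simp
    show "{z \<in> topspace Y. h z \<le> c1} \<inter> {z \<in> topspace Y. - h z \<le> - c2} = {}"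
      using \<open>c1 < c2\<close> by auto
  qed
qed

lemma closure_of_subset_closure_theta_omega: "Y closure_of M \<subseteq> closure_theta_omega Y M"
proof
  fix y assume y: "y \<in> Y closure_of M"
  have "Y closure_of U \<inter> M \<noteq> {}" if "omega_hull Y {y} U" for U
  proof -
    have U: "openin Y U" "y \<in> U" using omega_hull_openin[OF that] by auto
    then obtain m where "m \<in> M" "m \<in> U" using y by (auto simp: in_closure_of)
    then show ?thesis using closure_of_subset[OF openin_subset[OF U(1)]] by blast
  qed
  then show "y \<in> closure_theta_omega Y M"
    using y closure_of_subset_topspace[of Y M] unfolding closure_theta_omega_def by blast
qed

definition theta_omega_cluster_set ::
    "'a topology \<Rightarrow> 'b topology \<Rightarrow> 'a set \<Rightarrow> ('a \<Rightarrow> 'b) \<Rightarrow> 'a \<Rightarrow> 'b set" where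
  "theta_omega_cluster_set X Y S f x =
     (\<Inter>P\<in>{P. openin X P \<and> x \<in> P}. closure_theta_omega Y (f ` (P \<inter> S)))"

lemma X_theta_omega_eq_cluster_set:
  "X_theta_omega X Y S f V = {x \<in> topspace X. theta_omega_cluster_set X Y S f x \<subseteq> V}"
  unfolding X_theta_omega_def theta_omega_cluster_set_def ..

lemma theta_omega_cluster_set_subset_topspace:
  "x \<in> topspace X \<Longrightarrow> theta_omega_cluster_set X Y S f x \<subseteq> topspace Y"
  unfolding theta_omega_cluster_set_def closure_theta_omega_def by blast

lemma in_closure_of_preimage_if_hull_of_cluster_point:
  assumes x: "x \<in> topspace X" and y: "y \<in> theta_omega_cluster_set X Y S f x"
    and U: "omega_hull Y {y} U" "Y closure_of U \<subseteq> A"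
  shows "x \<in> X closure_of {s \<in> S. f s \<in> A}"
proof -
  have "\<exists>s\<in>{s \<in> S. f s \<in> A}. s \<in> T" if "x \<in> T" "openin X T" for T
  proof -
    have "y \<in> closure_theta_omega Y (f ` (T \<inter> S))"
      using y that unfolding theta_omega_cluster_set_def by blast
    then have "Y closure_of U \<inter> f ` (T \<inter> S) \<noteq> {}"
      using U(1) unfolding closure_theta_omega_def by blast
    then show ?thesis using U(2) by blast
  qed
  then show ?thesis using x by (auto simp: in_closure_of)
qed

lemma in_closure_of_dense_Int_open:
  assumes "X closure_of S = topspace X" "openin X P" "x \<in> P"
  shows "x \<in> X closure_of (P \<inter> S)"
  using openin_Int_closure_of_subset[OF assms(2), of S] assms openin_subset by blast

lemma theta_omega_cluster_set_eq_extension: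
  assumes fh: "functionally_hausdorff Y" and dense: "X closure_of S = topspace X"
    and g: "continuous_map X Y g" and ext: "\<forall>s\<in>S. g s = f s" and x: "x \<in> topspace X"
  shows "theta_omega_cluster_set X Y S f x = {g x}"
proof
  have gx: "g x \<in> topspace Y" using continuous_map_image_subset_topspace[OF g] x by blast
  show "theta_omega_cluster_set X Y S f x \<subseteq> {g x}"
  proof
    fix y assume y: "y \<in> theta_omega_cluster_set X Y S f x"
    show "y \<in> {g x}"
    proof (rule ccontr)
      assume "y \<notin> {g x}"
      moreover have "y \<in> topspace Y"
        using theta_omega_cluster_set_subset_topspace[OF x, of Y S f] y by blast
      ultimately obtain U1 U2 A1 A2 where
        sep: "omega_hull Y {y} U1" "omega_hull Y {g x} U2" "closedin Y A1" "A1 \<inter> A2 = {}"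
          "Y closure_of U1 \<subseteq> A1" "Y closure_of U2 \<subseteq> A2"
        using functionally_hausdorff_omega_hull_separation[OF fh _ gx] by (metis singletonI)
      have "g x \<in> A2"
        using omega_hull_openin[OF sep(2)] closure_of_subset[OF openin_subset] sep(6) by blast
      define W where "W = {z \<in> topspace X. g z \<in> topspace Y - A1}"
      have W: "openin X W" "x \<in> W"
        using openin_continuous_map_preimage[OF g] sep(3) x gx \<open>g x \<in> A2\<close> sep(4)
        unfolding W_def by blast+
      have "W \<inter> {s \<in> S. f s \<in> A1} = {}" using ext unfolding W_def by auto
      moreover have "x \<in> X closure_of {s \<in> S. f s \<in> A1}"
        using in_closure_of_preimage_if_hull_of_cluster_point[OF x y sep(1,5)] .
      ultimately show False using openin_Int_closure_of_eq_empty[OF W(1)] W(2) by blast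
    qed
  qed
  have "g x \<in> closure_theta_omega Y (f ` (P \<inter> S))" if "openin X P" "x \<in> P" for P
  proof -
    have "g x \<in> Y closure_of g ` (P \<inter> S)"
      using continuous_map_image_closure_subset[OF g] in_closure_of_dense_Int_open[OF dense that]
      by blast
    also have "g ` (P \<inter> S) = f ` (P \<inter> S)" using ext by auto
    finally show ?thesis using closure_of_subset_closure_theta_omega[of Y] by blast
  qed
  then show "{g x} \<subseteq> theta_omega_cluster_set X Y S f x"
    unfolding theta_omega_cluster_set_def by blast
qed

lemma continuous_extension_openin_X_theta_omega:
  assumes "functionally_hausdorff Y" "X closure_of S = topspace X"
    and g: "continuous_map X Y g" and ext: "\<forall>s\<in>S. g s = f s" and V: "openin Y V"
  shows "openin X (X_theta_omega X Y S f V)"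
proof -
  have "X_theta_omega X Y S f V = {x \<in> topspace X. g x \<in> V}"
    unfolding X_theta_omega_eq_cluster_set
    by (rule Collect_cong) (auto simp: theta_omega_cluster_set_eq_extension[OF assms(1-2) g ext])
  then show ?thesis using openin_continuous_map_preimage[OF g V] by simp
qed

lemma continuous_extension_closure_preimage_Inter_empty:
  assumes g: "continuous_map X Y g" and ext: "\<forall>s\<in>S. g s = f s" and S: "S \<subseteq> topspace X"
    and closed: "\<forall>A\<in>\<A>. closedin Y A" and empty: "topspace Y \<inter> \<Inter>\<A> = {}"
  shows "topspace X \<inter> (\<Inter>A\<in>\<A>. X closure_of {s \<in> S. f s \<in> A}) = {}"
proof -
  have "X closure_of {s \<in> S. f s \<in> A} \<subseteq> {z \<in> topspace X. g z \<in> A}" if "A \<in> \<A>" for A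
  proof (rule closure_of_minimal)
    show "{s \<in> S. f s \<in> A} \<subseteq> {z \<in> topspace X. g z \<in> A}" using S ext by auto
    show "closedin X {z \<in> topspace X. g z \<in> A}"
      using closedin_continuous_map_preimage[OF g] closed that by blast
  qed
  then show ?thesis using empty continuous_map_image_subset_topspace[OF g] by blast
qed

lemma theta_omega_cluster_set_nonempty:
  assumes empty_Inter: "\<And>\<A>. \<forall>A\<in>\<A>. closedin Y A \<Longrightarrow> topspace Y \<inter> \<Inter>\<A> = {} \<Longrightarrow>
              topspace X \<inter> (\<Inter>A\<in>\<A>. X closure_of {s \<in> S. f s \<in> A}) = {}"
    and dense: "X closure_of S = topspace X" and fS: "f ` S \<subseteq> topspace Y"
    and x: "x \<in> topspace X"
  shows "theta_omega_cluster_set X Y S f x \<noteq> {}"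
proof -
  define \<A> where "\<A> = (\<lambda>P. Y closure_of (f ` (P \<inter> S))) ` {P. openin X P \<and> x \<in> P}"
  have "x \<in> X closure_of {s \<in> S. f s \<in> Y closure_of (f ` (P \<inter> S))}"
    if "openin X P" "x \<in> P" for P
  proof -
    have "f ` (P \<inter> S) \<subseteq> Y closure_of (f ` (P \<inter> S))"
      using fS by (intro closure_of_subset) blast
    then have "P \<inter> S \<subseteq> {s \<in> S. f s \<in> Y closure_of (f ` (P \<inter> S))}" by blast
    then show ?thesis
      using in_closure_of_dense_Int_open[OF dense that] closure_of_mono by blast
  qed
  then have "x \<in> topspace X \<inter> (\<Inter>A\<in>\<A>. X closure_of {s \<in> S. f s \<in> A})"
    using x unfolding \<A>_def by blast
  moreover have "\<forall>A\<in>\<A>. closedin Y A" unfolding \<A>_def by auto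
  ultimately obtain y where "y \<in> topspace Y \<inter> \<Inter>\<A>"
    using empty_Inter[of \<A>] by blast
  then have "y \<in> theta_omega_cluster_set X Y S f x"
    using closure_of_subset_closure_theta_omega[of Y]
    unfolding theta_omega_cluster_set_def \<A>_def by blast
  then show ?thesis by blast
qed

lemma theta_omega_cluster_set_subsingleton:
  assumes fh: "functionally_hausdorff Y"
    and empty_Inter: "\<And>\<A>. \<forall>A\<in>\<A>. closedin Y A \<Longrightarrow> topspace Y \<inter> \<Inter>\<A> = {} \<Longrightarrow>
              topspace X \<inter> (\<Inter>A\<in>\<A>. X closure_of {s \<in> S. f s \<in> A}) = {}"
    and x: "x \<in> topspace X"
    and y: "y1 \<in> theta_omega_cluster_set X Y S f x" "y2 \<in> theta_omega_cluster_set X Y S f x"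
  shows "y1 = y2"
proof (rule ccontr)
  assume "y1 \<noteq> y2"
  moreover have "y1 \<in> topspace Y" "y2 \<in> topspace Y"
    using theta_omega_cluster_set_subset_topspace[OF x, of Y S f] y by blast+
  ultimately obtain U1 U2 A1 A2 where sep: "omega_hull Y {y1} U1" "omega_hull Y {y2} U2"
      "closedin Y A1" "closedin Y A2" "A1 \<inter> A2 = {}"
      "Y closure_of U1 \<subseteq> A1" "Y closure_of U2 \<subseteq> A2"
    using functionally_hausdorff_omega_hull_separation[OF fh] by metis
  have "topspace X \<inter> (\<Inter>A\<in>{A1, A2}. X closure_of {s \<in> S. f s \<in> A}) = {}"
    using empty_Inter[of "{A1, A2}"] sep(3-5) by blast
  moreover have "x \<in> X closure_of {s \<in> S. f s \<in> A1}" "x \<in> X closure_of {s \<in> S. f s \<in> A2}"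
    using in_closure_of_preimage_if_hull_of_cluster_point[OF x y(1) sep(1,6)]
      in_closure_of_preimage_if_hull_of_cluster_point[OF x y(2) sep(2,7)] .
  ultimately show False using x by blast
qed

lemma image_in_theta_omega_cluster_set:
  assumes "s \<in> S" "f s \<in> topspace Y"
  shows "f s \<in> theta_omega_cluster_set X Y S f s"
proof -
  have "f s \<in> Y closure_of (f ` (P \<inter> S))" if "s \<in> P" for P
    using assms that by (auto simp: in_closure_of)
  then show ?thesis
    using closure_of_subset_closure_theta_omega[of Y]
    unfolding theta_omega_cluster_set_def by blast
qed

lemma theta_omega_conditions_imp_continuous_extension:
  assumes fh: "functionally_hausdorff Y"
    and S: "S \<subseteq> topspace X" and dense: "X closure_of S = topspace X"
    and fS: "f ` S \<subseteq> topspace Y"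
    and empty_Inter: "\<And>\<A>. \<forall>A\<in>\<A>. closedin Y A \<Longrightarrow> topspace Y \<inter> \<Inter>\<A> = {} \<Longrightarrow>
              topspace X \<inter> (\<Inter>A\<in>\<A>. X closure_of {s \<in> S. f s \<in> A}) = {}"
    and open_X_theta_omega: "\<And>V. openin Y V \<Longrightarrow> openin X (X_theta_omega X Y S f V)"
  shows "\<exists>g. continuous_map X Y g \<and> (\<forall>s\<in>S. g s = f s)"
proof -
  define g where "g x = (SOME y. y \<in> theta_omega_cluster_set X Y S f x)" for x
  have cluster_eq: "theta_omega_cluster_set X Y S f x = {g x}" if x: "x \<in> topspace X" for x
  proof -
    have gx: "g x \<in> theta_omega_cluster_set X Y S f x"
      unfolding g_def using theta_omega_cluster_set_nonempty[OF empty_Inter dense fS x]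
      by (rule some_in_eq[THEN iffD2])
    have "y = g x" if "y \<in> theta_omega_cluster_set X Y S f x" for y
      using theta_omega_cluster_set_subsingleton[OF fh empty_Inter x that gx] .
    then show ?thesis using gx by blast
  qed
  have "continuous_map X Y g"
    unfolding continuous_map_def
  proof (intro conjI allI impI)
    show "g \<in> topspace X \<rightarrow> topspace Y"
    proof
      fix x assume x: "x \<in> topspace X"
      show "g x \<in> topspace Y"
        using theta_omega_cluster_set_subset_topspace[OF x, of Y S f] by (simp add: cluster_eq[OF x])
    qed
    show "openin X {x \<in> topspace X. g x \<in> V}" if "openin Y V" for V
    proof -
      have "X_theta_omega X Y S f V = {x \<in> topspace X. g x \<in> V}"
        unfolding X_theta_omega_eq_cluster_set by (rule Collect_cong) (auto simp: cluster_eq)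
      then show ?thesis using open_X_theta_omega[OF that] by simp
    qed
  qed
  moreover have "g s = f s" if "s \<in> S" for s
  proof -
    have "f s \<in> theta_omega_cluster_set X Y S f s"
      using image_in_theta_omega_cluster_set[OF that] fS that by blast
    moreover have "s \<in> topspace X" using S that by blast
    ultimately show ?thesis by (simp add: cluster_eq)
  qed
  ultimately show ?thesis by blast
qed

theorem corollary3p5:
  fixes X :: "'a topology" and Y :: "'b topology" and S :: "'a set" and f :: "'a \<Rightarrow> 'b"
  assumes "functionally_hausdorff Y"
    and "S \<subseteq> topspace X" and "X closure_of S = topspace X"
    and "continuous_map (subtopology X S) Y f"
  shows "(\<exists>g. continuous_map X Y g \<and> (\<forall>x\<in>S. g x = f x)) \<longleftrightarrow>
         ((\<forall>\<A>. (\<forall>A\<in>\<A>. closedin Y A) \<and> topspace Y \<inter> \<Inter>\<A> = {} \<longrightarrow>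
              topspace X \<inter> (\<Inter>A\<in>\<A>. X closure_of {x \<in> S. f x \<in> A}) = {}) \<and>
          (\<forall>V. openin Y V \<longrightarrow> openin X (X_theta_omega X Y S f V)))"
proof
  assume "\<exists>g. continuous_map X Y g \<and> (\<forall>x\<in>S. g x = f x)"
  then obtain g where g: "continuous_map X Y g" and ext: "\<forall>x\<in>S. g x = f x" by blast
  show "(\<forall>\<A>. (\<forall>A\<in>\<A>. closedin Y A) \<and> topspace Y \<inter> \<Inter>\<A> = {} \<longrightarrow>
              topspace X \<inter> (\<Inter>A\<in>\<A>. X closure_of {x \<in> S. f x \<in> A}) = {}) \<and>
          (\<forall>V. openin Y V \<longrightarrow> openin X (X_theta_omega X Y S f V))"
    using continuous_extension_closure_preimage_Inter_empty[OF g ext assms(2)]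
      continuous_extension_openin_X_theta_omega[OF assms(1,3) g ext] by blast
next
  assume conditions: "(\<forall>\<A>. (\<forall>A\<in>\<A>. closedin Y A) \<and> topspace Y \<inter> \<Inter>\<A> = {} \<longrightarrow>
              topspace X \<inter> (\<Inter>A\<in>\<A>. X closure_of {x \<in> S. f x \<in> A}) = {}) \<and>
          (\<forall>V. openin Y V \<longrightarrow> openin X (X_theta_omega X Y S f V))"
  have fS: "f ` S \<subseteq> topspace Y"
    using continuous_map_image_subset_topspace[OF assms(4)] assms(2)
    by (simp add: Int_absorb1)
  show "\<exists>g. continuous_map X Y g \<and> (\<forall>x\<in>S. g x = f x)"
    using conditions by (intro theta_omega_conditions_imp_continuous_extension[OF assms(1-3) fS]) auto
qed

end
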